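(* Fix $d\ge2$. For finite sets $S\subseteq\mathbb{Z}^d$, $p_{\mathbb{Z}^d}(S)\ge \frac{(1+o(1))|S|}{\ln|S|}$, where $o(1)\to0$ as $|S|\to\infty$.
   Context: $p_{\mathbb{Z}^d}(S)$ is the largest number of colors for which there is a coloring of $\mathbb{Z}^d$ such that every translate $\mathbf{n}+S=\{\mathbf{n}+\mathbf{s}:\mathbf{s}\in S\}$, $\mathbf{n}\in\mathbb{Z}^d$, contains an element of each color. (Known result usable: for finite $S\subseteq\mathbb{Z}$, $p_{\mathbb{Z}}(S)\ge\frac{(1+o(1))|S|}{\ln|S|}$, due to Alon–Kříž–Nešetřil and Harris–Srinivasan.) *)

theory Defs
  imports "HOL-Analysis.Analysis"
begin

definition polychromatic :: "('a::plus \<Rightarrow> nat) \<Rightarrow> nat \<Rightarrow> 'a set \<Rightarrow> bool" where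
  "polychromatic c k S \<longleftrightarrow> (\<forall>n. \<forall>i<k. \<exists>s\<in>S. c (n + s) = i)"

definition p_Zd :: "(int ^ 'd) set \<Rightarrow> nat" where
  "p_Zd S = (GREATEST k. \<exists>c. polychromatic c k S)"

end

theory Submission
  imports Defs "HOL-Real_Asymp.Real_Asymp"
begin

text \<open>A finite \<open>S \<subseteq> \<int>\<^sup>d\<close> of size n embeds into a large discrete torus, where its translates form a
  finite n-uniform hypergraph in which every vertex lies in n edges, and polychromatic colourings
  of this hypergraph lift to \<open>\<int>\<^sup>d\<close>. Such a hypergraph is coloured in two rounds, each justified by
  the Lov\'asz local lemma in its counting form on a finite product space: first the vertices
  are split into \<open>T \<approx> n / ln\<^sup>3 n\<close> classes so that every edge meets every class in
  \<open>m \<approx> (1 - \<epsilon>) n / T\<close> vertices, by a Chernoff-type bound; then each class is coloured with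
  \<open>l \<approx> m / ln n\<close> colours so that each of these m-sets sees every colour. This yields
  \<open>T l = (1 + o(1)) n / ln n\<close> colours.\<close>

section \<open>The local lemma on a finite product space\<close>

definition determined_on :: "('v \<Rightarrow> 'c) set \<Rightarrow> 'v set \<Rightarrow> ('v \<Rightarrow> 'c) set \<Rightarrow> bool" where
  "determined_on \<Omega> U A \<longleftrightarrow> (\<forall>f\<in>\<Omega>. \<forall>g\<in>\<Omega>. (\<forall>v\<in>U. f v = g v) \<longrightarrow> (f \<in> A \<longleftrightarrow> g \<in> A))"

definition avoiding :: "('v \<Rightarrow> 'c) set \<Rightarrow> ('i \<Rightarrow> ('v \<Rightarrow> 'c) set) \<Rightarrow> 'i set \<Rightarrow> ('v \<Rightarrow> 'c) set" where
  "avoiding \<Omega> A J = {f\<in>\<Omega>. \<forall>j\<in>J. f \<notin> A j}"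

lemma override_on_PiE: "f \<in> PiE V F \<Longrightarrow> g \<in> PiE V F \<Longrightarrow> override_on f g U \<in> PiE V F"
  by (auto simp: override_on_def PiE_def extensional_def Pi_def)

text \<open>Swapping the coordinates outside U is a bijection between \<open>A \<times> B\<close> and
  \<open>(A \<inter> B) \<times> \<Omega>\<close>.\<close>
lemma card_inter_determined_on_disjoint:
  fixes A B :: "('v \<Rightarrow> 'c) set"
  assumes A: "A \<subseteq> PiE V F" and B: "B \<subseteq> PiE V F"
    and detA: "determined_on (PiE V F) U A" and detB: "determined_on (PiE V F) W B"
    and disjoint: "U \<inter> W = {}"
  shows "card (A \<inter> B) * card (PiE V F) = card A * card B"
proof -
  define \<Phi> :: "('v \<Rightarrow> 'c) \<times> ('v \<Rightarrow> 'c) \<Rightarrow> _" where "\<Phi> = (\<lambda>(f, g). (override_on g f U, override_on f g U))"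
  have override_mem: "override_on g f U \<in> A \<longleftrightarrow> f \<in> A" "override_on g f U \<in> B \<longleftrightarrow> g \<in> B"
    if "f \<in> PiE V F" "g \<in> PiE V F" for f g
  proof -
    have "override_on g f U \<in> PiE V F" using that by (intro override_on_PiE)
    moreover have "\<forall>v\<in>U. override_on g f U v = f v" "\<forall>v\<in>W. override_on g f U v = g v"
      using disjoint by (auto simp: override_on_def)
    ultimately show "override_on g f U \<in> A \<longleftrightarrow> f \<in> A" "override_on g f U \<in> B \<longleftrightarrow> g \<in> B"
      using detA detB that unfolding determined_on_def by blast+
  qed
  have forward: "\<Phi> ` (A \<times> B) \<subseteq> (A \<inter> B) \<times> PiE V F"
  proof (intro image_subsetI)
    fix x assume "x \<in> A \<times> B"
    then obtain f g where x: "x = (f, g)" "f \<in> A" "g \<in> B" by auto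
    then have "f \<in> PiE V F" "g \<in> PiE V F" using A B by auto
    then show "\<Phi> x \<in> (A \<inter> B) \<times> PiE V F"
      using x override_mem[of f g] override_on_PiE[of f V F g U] by (simp add: \<Phi>_def)
  qed
  have backward: "\<Phi> ` ((A \<inter> B) \<times> PiE V F) \<subseteq> A \<times> B"
  proof (intro image_subsetI)
    fix x assume "x \<in> (A \<inter> B) \<times> PiE V F"
    then obtain f g where x: "x = (f, g)" "f \<in> A \<inter> B" "g \<in> PiE V F" by auto
    then have "f \<in> PiE V F" using A by auto
    then show "\<Phi> x \<in> A \<times> B"
      using x override_mem[of f g] override_mem[of g f] by (simp add: \<Phi>_def)
  qed
  have involution: "\<Phi> (\<Phi> x) = x" for x
    by (cases x) (simp add: \<Phi>_def override_on_def fun_eq_iff)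
  have "bij_betw \<Phi> (A \<times> B) ((A \<inter> B) \<times> PiE V F)"
    using involution by (intro bij_betw_byWitness[OF _ _ forward backward]) blast+
  then have "card (A \<times> B) = card ((A \<inter> B) \<times> PiE V F)"
    by (rule bij_betw_same_card)
  then show ?thesis
    by (simp add: card_cartesian_product)
qed

lemma determined_on_avoiding:
  assumes "\<And>j. j \<in> J \<Longrightarrow> determined_on \<Omega> (U j) (A j)"
  shows "determined_on \<Omega> (\<Union>(U ` J)) (avoiding \<Omega> A J)"
  unfolding determined_on_def
proof (intro ballI impI)
  fix f g assume fg: "f \<in> \<Omega>" "g \<in> \<Omega>" and agree: "\<forall>v\<in>\<Union>(U ` J). f v = g v"
  have "f \<in> A j \<longleftrightarrow> g \<in> A j" if "j \<in> J" for j
    using assms[OF that] that fg agree unfolding determined_on_def by blast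
  then show "f \<in> avoiding \<Omega> A J \<longleftrightarrow> g \<in> avoiding \<Omega> A J"
    using fg by (auto simp: avoiding_def)
qed

lemma card_avoiding_Un_ge:
  fixes q :: real
  assumes "finite \<Omega>" "finite K"
    and "\<And>j. j \<in> K \<Longrightarrow> card (A j \<inter> avoiding \<Omega> A J) \<le> q * card (avoiding \<Omega> A J)"
  shows "(1 - q * card K) * card (avoiding \<Omega> A J) \<le> card (avoiding \<Omega> A (J \<union> K))"
proof -
  let ?B = "avoiding \<Omega> A J" and ?X = "\<Union>j\<in>K. A j \<inter> avoiding \<Omega> A J"
  have "real (card ?X) \<le> (\<Sum>j\<in>K. real (card (A j \<inter> ?B)))"
    using card_UN_le[OF assms(2)] by (metis of_nat_le_iff of_nat_sum)
  also have "\<dots> \<le> (\<Sum>j\<in>K. q * card ?B)"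
    by (rule sum_mono) (rule assms(3))
  also have "\<dots> = q * card K * card ?B"
    by simp
  finally have X: "real (card ?X) \<le> q * card K * card ?B" .
  have "finite ?B" using assms(1) by (simp add: avoiding_def)
  then have "card (?B - ?X) = card ?B - card ?X" "card ?X \<le> card ?B"
    by (auto intro: card_Diff_subset card_mono)
  moreover have "avoiding \<Omega> A (J \<union> K) = ?B - ?X" by (auto simp: avoiding_def)
  ultimately have "real (card (avoiding \<Omega> A (J \<union> K))) = real (card ?B) - real (card ?X)"
    by simp
  then show ?thesis
    using X unfolding left_diff_distrib by linarith
qed

context
  fixes V :: "'v set" and F :: "'v \<Rightarrow> 'c set" and I :: "'i set"
    and A :: "'i \<Rightarrow> ('v \<Rightarrow> 'c) set" and U :: "'i \<Rightarrow> 'v set" and p :: real and D :: nat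
  assumes finite_space: "finite (PiE V F)" and nonempty_space: "PiE V F \<noteq> {}"
    and finite_index: "finite I"
    and events: "\<And>i. i \<in> I \<Longrightarrow> A i \<subseteq> PiE V F"
    and determined: "\<And>i. i \<in> I \<Longrightarrow> determined_on (PiE V F) (U i) (A i)"
    and event_card: "\<And>i. i \<in> I \<Longrightarrow> card (A i) \<le> p * card (PiE V F)"
    and dependency: "\<And>i. i \<in> I \<Longrightarrow> card {j\<in>I. j \<noteq> i \<and> U i \<inter> U j \<noteq> {}} \<le> D"
    and p_nonneg: "0 \<le> p" and p_small: "4 * p * D \<le> 1" and D_pos: "1 \<le> D"
begin

lemma card_inter_avoiding_independent:
  assumes i: "i \<in> I" and J: "J \<subseteq> I" "\<And>j. j \<in> J \<Longrightarrow> U i \<inter> U j = {}"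
  shows "card (A i \<inter> avoiding (PiE V F) A J) \<le> p * card (avoiding (PiE V F) A J)"
proof -
  let ?\<Omega> = "PiE V F" and ?B = "avoiding (PiE V F) A J"
  have "determined_on ?\<Omega> (\<Union>(U ` J)) ?B"
    using J determined by (intro determined_on_avoiding) auto
  then have "card (A i \<inter> ?B) * card ?\<Omega> = card (A i) * card ?B"
    using i J events determined
    by (intro card_inter_determined_on_disjoint[where U = "U i" and W = "\<Union>(U ` J)"])
       (auto simp: avoiding_def)
  then have "real (card (A i \<inter> ?B)) * card ?\<Omega> = real (card (A i)) * card ?B"
    by (metis of_nat_mult)
  also have "\<dots> \<le> (p * card ?\<Omega>) * card ?B"
    by (rule mult_right_mono[OF event_card[OF i]]) simp
  finally show ?thesis
    using finite_space nonempty_space by (simp add: card_gt_0_iff algebra_simps)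
qed

text \<open>Conditioned on avoiding the events in J, each further event has probability at most 2p:
  the events of J that share no coordinates with \<open>A i\<close> do not change its probability, and by
  induction the at most D others cut away at most half of the space.\<close>
lemma card_inter_avoiding_le:
  assumes "J \<subseteq> I" "i \<in> I - J"
  shows "card (A i \<inter> avoiding (PiE V F) A J) \<le> 2 * p * card (avoiding (PiE V F) A J)"
  using assms
proof (induction "card J" arbitrary: J i rule: less_induct)
  case less
  let ?av = "avoiding (PiE V F) A"
  define K where "K = {j\<in>J. U i \<inter> U j \<noteq> {}}"
  define J' where "J' = J - K"
  have J: "J = J' \<union> K" and J': "J' \<subseteq> I" using less.prems by (auto simp: J'_def K_def)
  have finJ: "finite J" using less.prems finite_index finite_subset by blast
  have "real (card (A i \<inter> ?av J)) \<le> card (A i \<inter> ?av J')"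
    using finite_space by (intro of_nat_mono card_mono) (auto simp: avoiding_def J'_def)
  also have "\<dots> \<le> p * card (?av J')"
    using less.prems by (intro card_inter_avoiding_independent) (auto simp: J'_def K_def)
  also have "\<dots> \<le> 2 * p * card (?av J)"
  proof (cases "K = {}")
    case True
    then show ?thesis using p_nonneg by (simp add: J'_def)
  next
    case False
    have "card J' < card J" using False finJ by (intro psubset_card_mono) (auto simp: J'_def K_def)
    then have IH: "card (A j \<inter> ?av J') \<le> 2 * p * card (?av J')" if "j \<in> K" for j
      using less.hyps[of J' j] less.prems J' that by (auto simp: J'_def K_def)
    have "K \<subseteq> {j\<in>I. j \<noteq> i \<and> U i \<inter> U j \<noteq> {}}"
      using less.prems by (auto simp: K_def)
    then have "card K \<le> D"
      using finite_index dependency[of i] less.prems card_mono[of "{j\<in>I. j \<noteq> i \<and> U i \<inter> U j \<noteq> {}}" K]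
      by simp
    then have "2 * p * card K \<le> 1 / 2"
      using p_small p_nonneg mult_left_mono[of "card K" D "2 * p"] by simp
    moreover have "(1 - 2 * p * card K) * card (?av J') \<le> card (?av J)"
      unfolding J using finite_space finJ IH by (intro card_avoiding_Un_ge) (auto simp: K_def)
    ultimately have "card (?av J') / 2 \<le> card (?av J)"
      using mult_right_mono[of "1 / 2" "1 - 2 * p * card K" "card (?av J')"] by simp
    then show ?thesis
      using p_nonneg mult_left_mono[of "card (?av J') / 2" "card (?av J)" p] by simp
  qed
  finally show ?case .
qed

lemma card_avoiding_pos:
  assumes "J \<subseteq> I"
  shows "0 < card (avoiding (PiE V F) A J)"
proof -
  have "finite J" using assms finite_index finite_subset by blast
  then show ?thesis using assms
  proof (induction J rule: finite_induct)
    case empty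
    then show ?case using finite_space nonempty_space by (simp add: avoiding_def card_gt_0_iff)
  next
    case (insert j J)
    have "(1 - 2 * p * card {j}) * card (avoiding (PiE V F) A J)
        \<le> card (avoiding (PiE V F) A (J \<union> {j}))"
      using finite_space insert card_inter_avoiding_le by (intro card_avoiding_Un_ge) auto
    moreover have "0 < 1 - 2 * p"
      using p_small p_nonneg D_pos mult_left_mono[of 1 "real D" "4 * p"] by simp
    then have "0 < (1 - 2 * p) * card (avoiding (PiE V F) A J)"
      using insert by (simp add: zero_less_mult_iff)
    ultimately have "0 < real (card (avoiding (PiE V F) A (insert j J)))"
      by simp
    then show ?case
      by simp
  qed
qed

theorem lovasz_local_lemma: "\<exists>f\<in>PiE V F. \<forall>i\<in>I. f \<notin> A i"
  using card_avoiding_pos[of I] by (auto simp: avoiding_def card_gt_0_iff)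

end

section \<open>Counting colourings\<close>

lemma prod_if_mem_eq:
  assumes "finite V" "W \<subseteq> V"
  shows "(\<Prod>v\<in>V. if v \<in> W then a else b) = a ^ card W * b ^ (card V - card W)"
proof -
  have "(\<Prod>v\<in>V. if v \<in> W then a else b) = (\<Prod>v\<in>W. a) * (\<Prod>v\<in>V - W. b)"
    using assms by (simp add: prod.If_cases Int_absorb1 Diff_eq)
  then show ?thesis
    using assms by (simp add: card_Diff_subset finite_subset)
qed

lemma card_PiE_if_mem:
  assumes "finite V" "W \<subseteq> V"
  shows "card (PiE V (\<lambda>v. if v \<in> W then X else Y)) = card X ^ card W * card Y ^ (card V - card W)"
  using assms by (simp add: card_PiE if_distrib prod_if_mem_eq)

lemma card_colourings_missing_colour_le:
  assumes "finite V" "W \<subseteq> V" "j < q"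
  shows "card {f\<in>PiE V (\<lambda>_. {..<q}). \<forall>v\<in>W. f v \<noteq> j}
    \<le> exp (- card W / q) * card (PiE V (\<lambda>_. {..<q::nat}))"
proof -
  have q: "0 < q" and W: "card W \<le> card V" using assms by (auto intro: card_mono)
  have "{f\<in>PiE V (\<lambda>_. {..<q}). \<forall>v\<in>W. f v \<noteq> j}
      = PiE V (\<lambda>v. if v \<in> W then {..<q} - {j} else {..<q})"
    using assms(2) by (auto simp: PiE_iff extensional_def split: if_splits)
  moreover have "real (q - 1) = (1 - 1 / q) * q"
    using q by (simp add: field_simps)
  ultimately have "real (card {f\<in>PiE V (\<lambda>_. {..<q}). \<forall>v\<in>W. f v \<noteq> j})
      = ((1 - 1 / q) * q) ^ card W * real q ^ (card V - card W)"
    using assms by (simp add: card_PiE_if_mem)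
  also have "\<dots> = (1 - 1 / q) ^ card W * real q ^ card V"
    using W by (simp add: power_mult_distrib power_add[symmetric])
  also have "\<dots> \<le> exp (- 1 / q) ^ card W * real q ^ card V"
    using q exp_ge_add_one_self[of "- 1 / q"] by (intro mult_right_mono power_mono) auto
  also have "\<dots> = exp (- card W / q) * card (PiE V (\<lambda>_. {..<q}))"
    using assms(1) by (simp add: card_PiE exp_of_nat_mult[symmetric])
  finally show ?thesis .
qed

text \<open>Chernoff's exponential moment argument, for \<open>0 < z \<le> 1\<close>: every colouring giving fewer than m
  vertices of E the colour g has weight \<open>z ^ card {v\<in>E. f v = g} \<ge> z ^ m\<close>, and the total weight
  factorises over the vertices.\<close>
lemma card_colourings_few_of_colour_le:
  fixes z :: real
  assumes finV: "finite V" and EV: "E \<subseteq> V" and g: "g < T" and z: "0 < z" "z \<le> 1"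
  shows "card {f\<in>PiE V (\<lambda>_. {..<T}). card {v\<in>E. f v = g} < m} * z ^ m
    \<le> (real T - 1 + z) ^ card E * real T ^ (card V - card E)"
proof -
  let ?\<Omega> = "PiE V (\<lambda>_. {..<T})"
  define weight where "weight v c = (if v \<in> E \<and> c = g then z else 1)" for v c
  have power_eq: "z ^ card {v\<in>E. f v = g} = (\<Prod>v\<in>V. weight v (f v))" for f
  proof -
    have "(\<Prod>v\<in>V. weight v (f v)) = (\<Prod>v\<in>{v\<in>V. v \<in> E \<and> f v = g}. z)"
      unfolding weight_def by (rule prod.inter_filter[OF finV, symmetric])
    also have "{v\<in>V. v \<in> E \<and> f v = g} = {v\<in>E. f v = g}" using EV by auto
    finally show ?thesis by simp
  qed
  have weight_sum: "(\<Sum>c<T. weight v c) = (if v \<in> E then real T - 1 + z else T)" for v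
  proof (cases "v \<in> E")
    case True
    have "(\<Sum>c<T. weight v c) = weight v g + (\<Sum>c\<in>{..<T} - {g}. weight v c)"
      using g by (simp add: sum.remove)
    also have "(\<Sum>c\<in>{..<T} - {g}. weight v c) = real T - 1"
      using g by (simp add: weight_def)
    finally show ?thesis using True by (simp add: weight_def)
  qed (simp add: weight_def)
  have "(\<Sum>f\<in>?\<Omega>. z ^ card {v\<in>E. f v = g}) = (\<Prod>v\<in>V. \<Sum>c<T. weight v c)"
    unfolding power_eq using prod_sum_PiE[OF finV, of "\<lambda>_. {..<T}" weight] by simp
  also have "\<dots> = (real T - 1 + z) ^ card E * real T ^ (card V - card E)"
    unfolding weight_sum by (rule prod_if_mem_eq[OF finV EV])
  finally have weighted_count: "(\<Sum>f\<in>?\<Omega>. z ^ card {v\<in>E. f v = g})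
      = (real T - 1 + z) ^ card E * real T ^ (card V - card E)" .
  let ?F = "{f\<in>?\<Omega>. card {v\<in>E. f v = g} < m}"
  have "card ?F * z ^ m = (\<Sum>f\<in>?F. z ^ m)" by simp
  also have "\<dots> \<le> (\<Sum>f\<in>?F. z ^ card {v\<in>E. f v = g})"
    using z by (intro sum_mono power_decreasing) auto
  also have "\<dots> \<le> (\<Sum>f\<in>?\<Omega>. z ^ card {v\<in>E. f v = g})"
    using finV z by (intro sum_mono2 finite_PiE) auto
  finally show ?thesis unfolding weighted_count .
qed

lemma card_colourings_rare_colour_le:
  fixes z :: real
  assumes finV: "finite V" and EV: "E \<subseteq> V" and z: "0 < z" "z \<le> 1" and T: "0 < T"
  shows "card {f\<in>PiE V (\<lambda>_. {..<T}). \<exists>g<T. card {v\<in>E. f v = g} < m}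
    \<le> T * ((real T - 1 + z) / T) ^ card E / z ^ m * card (PiE V (\<lambda>_. {..<T::nat}))"
proof -
  let ?few = "\<lambda>g. {f\<in>PiE V (\<lambda>_. {..<T}). card {v\<in>E. f v = g} < m}"
  let ?bound = "(real T - 1 + z) ^ card E * real T ^ (card V - card E)"
  have "{f\<in>PiE V (\<lambda>_. {..<T}). \<exists>g<T. card {v\<in>E. f v = g} < m} = (\<Union>g<T. ?few g)"
    by auto
  then have "card {f\<in>PiE V (\<lambda>_. {..<T}). \<exists>g<T. card {v\<in>E. f v = g} < m}
      \<le> (\<Sum>g<T. card (?few g))"
    by (simp add: card_UN_le)
  then have "real (card {f\<in>PiE V (\<lambda>_. {..<T}). \<exists>g<T. card {v\<in>E. f v = g} < m})
      \<le> (\<Sum>g<T. real (card (?few g)))"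
    by (simp only: of_nat_sum[symmetric] of_nat_le_iff)
  also have "\<dots> \<le> (\<Sum>g<T. ?bound / z ^ m)"
    using card_colourings_few_of_colour_le[OF finV EV _ z] z
    by (intro sum_mono) (simp add: pos_le_divide_eq)
  also have "\<dots> = T * ?bound / z ^ m"
    by simp
  also have "?bound = ((real T - 1 + z) / T) ^ card E * card (PiE V (\<lambda>_. {..<T}))"
  proof -
    have "real T ^ card V = real T ^ card E * real T ^ (card V - card E)"
      using card_mono[OF finV EV] by (metis le_add_diff_inverse power_add)
    then show ?thesis
      using T finV by (simp add: card_PiE power_divide)
  qed
  finally show ?thesis
    by (simp add: mult.assoc)
qed

section \<open>Colouring uniform hypergraphs\<close>

lemma card_edges_meeting_le:
  assumes "finite I" "finite X" "\<And>v. v \<in> X \<Longrightarrow> card {i\<in>I. v \<in> E i} \<le> \<Delta>"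
  shows "card {i\<in>I. X \<inter> E i \<noteq> {}} \<le> card X * \<Delta>"
proof -
  have "finite (\<Union>v\<in>X. {i\<in>I. v \<in> E i})"
    using assms(1,2) by auto
  then have "card {i\<in>I. X \<inter> E i \<noteq> {}} \<le> card (\<Union>v\<in>X. {i\<in>I. v \<in> E i})"
    by (intro card_mono) auto
  also have "\<dots> \<le> (\<Sum>v\<in>X. card {i\<in>I. v \<in> E i})"
    by (rule card_UN_le[OF assms(2)])
  also have "\<dots> \<le> card X * \<Delta>"
    using sum_bounded_above[of X "\<lambda>v. card {i\<in>I. v \<in> E i}" \<Delta>] assms(3) by simp
  finally show ?thesis .
qed

lemma colouring_with_frequent_colours:
  fixes E :: "'i \<Rightarrow> 'v set" and T k m \<Delta> :: nat and z :: real
  assumes finV: "finite V" and finI: "finite I"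
    and edges: "\<And>i. i \<in> I \<Longrightarrow> E i \<subseteq> V \<and> card (E i) = k"
    and degree: "\<And>v. v \<in> V \<Longrightarrow> card {i\<in>I. v \<in> E i} \<le> \<Delta>"
    and T: "0 < T" and z: "0 < z" "z \<le> 1" and k\<Delta>: "1 \<le> k * \<Delta>"
    and small: "4 * (T * ((real T - 1 + z) / T) ^ k / z ^ m) * (real k * \<Delta>) \<le> 1"
  shows "\<exists>\<sigma> :: 'v \<Rightarrow> nat. \<forall>i\<in>I. \<forall>g<T. m \<le> card {v\<in>E i. \<sigma> v = g}"
proof -
  let ?\<Omega> = "PiE V (\<lambda>_. {..<T})"
  let ?bad = "\<lambda>i. {f\<in>?\<Omega>. \<exists>g<T. card {v\<in>E i. f v = g} < m}"
  have Tz: "0 < real T - 1 + z" using T z by linarith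
  have "\<exists>f\<in>?\<Omega>. \<forall>i\<in>I. f \<notin> ?bad i"
  proof (intro lovasz_local_lemma[where U = E and D = "k * \<Delta>"
        and p = "T * ((real T - 1 + z) / T) ^ k / z ^ m"])
    show "determined_on ?\<Omega> (E i) (?bad i)" for i
      unfolding determined_on_def
    proof (intro ballI impI)
      fix f g assume fg: "f \<in> ?\<Omega>" "g \<in> ?\<Omega>" and "\<forall>v\<in>E i. f v = g v"
      then have "{v\<in>E i. f v = c} = {v\<in>E i. g v = c}" for c by auto
      then show "f \<in> ?bad i \<longleftrightarrow> g \<in> ?bad i" using fg by simp
    qed
    show "card (?bad i) \<le> T * ((real T - 1 + z) / T) ^ k / z ^ m * card ?\<Omega>" if "i \<in> I" for i
      using card_colourings_rare_colour_le[OF finV _ z T, of "E i" m] edges[OF that] by simp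
    show "card {j\<in>I. j \<noteq> i \<and> E i \<inter> E j \<noteq> {}} \<le> k * \<Delta>" if "i \<in> I" for i
    proof -
      have Ei: "E i \<subseteq> V" "card (E i) = k" using edges[OF that] by auto
      have "card {j\<in>I. j \<noteq> i \<and> E i \<inter> E j \<noteq> {}} \<le> card {j\<in>I. E i \<inter> E j \<noteq> {}}"
        using finI by (intro card_mono) auto
      also have "\<dots> \<le> card (E i) * \<Delta>"
        using Ei finV degree by (intro card_edges_meeting_le[OF finI]) (auto intro: finite_subset)
      finally show ?thesis using Ei by simp
    qed
  qed (use finV finI T Tz z small k\<Delta> in \<open>simp_all add: PiE_eq_empty_iff finite_PiE lessThan_empty_iff\<close>)
  then obtain \<sigma> where \<sigma>: "\<sigma> \<in> ?\<Omega>" "\<forall>i\<in>I. \<sigma> \<notin> ?bad i"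
    by blast
  have "m \<le> card {v\<in>E i. \<sigma> v = g}" if "i \<in> I" "g < T" for i g
  proof (rule ccontr)
    assume "\<not> m \<le> card {v\<in>E i. \<sigma> v = g}"
    then have "\<sigma> \<in> ?bad i" using \<sigma>(1) that by auto
    then show False using \<sigma>(2) that by blast
  qed
  then show ?thesis
    by blast
qed

lemma polychromatic_colouring_exists:
  fixes W :: "'i \<Rightarrow> 'v set" and m \<Delta> l :: nat
  assumes finV: "finite V" and finI: "finite I"
    and edges: "\<And>i. i \<in> I \<Longrightarrow> W i \<subseteq> V \<and> card (W i) = m"
    and degree: "\<And>v. v \<in> V \<Longrightarrow> card {i\<in>I. v \<in> W i} \<le> \<Delta>"
    and l: "0 < l" and m\<Delta>l: "1 \<le> m * \<Delta> * l"
    and small: "4 * exp (- real m / l) * (real m * \<Delta> * l) \<le> 1"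
  shows "\<exists>\<tau> :: 'v \<Rightarrow> nat. \<forall>i\<in>I. \<forall>j<l. \<exists>v\<in>W i. \<tau> v = j"
proof -
  let ?\<Omega> = "PiE V (\<lambda>_. {..<l})"
  let ?miss = "\<lambda>(i, j). {f\<in>?\<Omega>. \<forall>v\<in>W i. f v \<noteq> j}"
  have "\<exists>f\<in>?\<Omega>. \<forall>x\<in>I \<times> {..<l}. f \<notin> ?miss x"
  proof (intro lovasz_local_lemma[where U = "W \<circ> fst" and D = "m * \<Delta> * l"
        and p = "exp (- real m / l)"])
    show "?miss x \<subseteq> ?\<Omega>" for x
      by (cases x) auto
    show "determined_on ?\<Omega> ((W \<circ> fst) x) (?miss x)" for x
      unfolding determined_on_def
    proof (intro ballI impI)
      fix f g assume "f \<in> ?\<Omega>" "g \<in> ?\<Omega>" "\<forall>v\<in>(W \<circ> fst) x. f v = g v"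
      then show "f \<in> ?miss x \<longleftrightarrow> g \<in> ?miss x"
        by (cases x) simp
    qed
    show "card (?miss x) \<le> exp (- real m / l) * card ?\<Omega>" if "x \<in> I \<times> {..<l}" for x
    proof -
      obtain i j where x: "x = (i, j)" by (cases x)
      then have "i \<in> I" "j < l" using that by auto
      then show ?thesis
        using card_colourings_missing_colour_le[OF finV, of "W i" j l] edges[of i] x by simp
    qed
    show "card {y\<in>I \<times> {..<l}. y \<noteq> x \<and> (W \<circ> fst) x \<inter> (W \<circ> fst) y \<noteq> {}} \<le> m * \<Delta> * l"
      if "x \<in> I \<times> {..<l}" for x
    proof -
      let ?N = "{i\<in>I. W (fst x) \<inter> W i \<noteq> {}}"
      have "fst x \<in> I" using that by (simp add: mem_Times_iff)
      then have Wx: "W (fst x) \<subseteq> V" "card (W (fst x)) = m" using edges by auto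
      then have "finite (W (fst x))" using finV finite_subset by blast
      then have "card ?N \<le> card (W (fst x)) * \<Delta>"
        using degree Wx(1) by (intro card_edges_meeting_le[OF finI]) auto
      have "card {y\<in>I \<times> {..<l}. y \<noteq> x \<and> (W \<circ> fst) x \<inter> (W \<circ> fst) y \<noteq> {}}
          \<le> card (?N \<times> {..<l})"
        using finI by (intro card_mono) auto
      also have "\<dots> = card ?N * l"
        by (simp add: card_cartesian_product)
      also have "\<dots> \<le> m * \<Delta> * l"
        using \<open>card ?N \<le> card (W (fst x)) * \<Delta>\<close> Wx(2) by simp
      finally show ?thesis .
    qed
  qed (use finV finI l m\<Delta>l small in \<open>simp_all add: PiE_eq_empty_iff finite_PiE lessThan_empty_iff\<close>)
  then obtain \<tau> where \<tau>: "\<tau> \<in> ?\<Omega>" "\<forall>x\<in>I \<times> {..<l}. \<tau> \<notin> ?miss x"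
    by blast
  have "\<exists>v\<in>W i. \<tau> v = j" if "i \<in> I" "j < l" for i j
    using \<tau>(2)[rule_format, of "(i, j)"] \<tau>(1) that by auto
  then show ?thesis
    by blast
qed

lemma polychromatic_product_colouring:
  fixes E :: "'i \<Rightarrow> 'v set" and T k m \<Delta> l :: nat and z :: real
  assumes finV: "finite V" and finI: "finite I"
    and edges: "\<And>i. i \<in> I \<Longrightarrow> E i \<subseteq> V \<and> card (E i) = k"
    and degree: "\<And>v. v \<in> V \<Longrightarrow> card {i\<in>I. v \<in> E i} \<le> \<Delta>"
    and T: "0 < T" and z: "0 < z" "z \<le> 1" and k\<Delta>: "1 \<le> k * \<Delta>" and l: "0 < l" and m: "1 \<le> m"
    and small1: "4 * (T * ((real T - 1 + z) / T) ^ k / z ^ m) * (real k * \<Delta>) \<le> 1"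
    and small2: "4 * exp (- real m / l) * (real m * \<Delta> * l) \<le> 1"
  shows "\<exists>col :: 'v \<Rightarrow> nat. \<forall>i\<in>I. \<forall>c<T * l. \<exists>v\<in>E i. col v = c"
proof -
  obtain \<sigma> where \<sigma>: "\<And>i g. i \<in> I \<Longrightarrow> g < T \<Longrightarrow> m \<le> card {v\<in>E i. \<sigma> v = g}"
    using colouring_with_frequent_colours[OF finV finI edges degree T z k\<Delta> small1] by blast
  have "\<forall>x\<in>I \<times> {..<T}. \<exists>W. W \<subseteq> {v\<in>E (fst x). \<sigma> v = snd x} \<and> card W = m"
  proof
    fix x assume "x \<in> I \<times> {..<T}"
    then have "m \<le> card {v\<in>E (fst x). \<sigma> v = snd x}"
      using \<sigma> by auto
    then obtain W where "W \<subseteq> {v\<in>E (fst x). \<sigma> v = snd x}" "card W = m"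
      by (rule obtain_subset_with_card_n)
    then show "\<exists>W. W \<subseteq> {v\<in>E (fst x). \<sigma> v = snd x} \<and> card W = m" by blast
  qed
  from bchoice[OF this] obtain W
    where W: "\<forall>x\<in>I \<times> {..<T}. W x \<subseteq> {v\<in>E (fst x). \<sigma> v = snd x} \<and> card (W x) = m"
    by blast
  have W_edges: "W x \<subseteq> V \<and> card (W x) = m" if "x \<in> I \<times> {..<T}" for x
  proof -
    have "fst x \<in> I" using that by (simp add: mem_Times_iff)
    then show ?thesis using W[rule_format, OF that] edges[of "fst x"] by auto
  qed
  have W_degree: "card {x\<in>I \<times> {..<T}. v \<in> W x} \<le> \<Delta>" if "v \<in> V" for v
  proof -
    have "{x\<in>I \<times> {..<T}. v \<in> W x} \<subseteq> {i\<in>I. v \<in> E i} \<times> {\<sigma> v}"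
    proof
      fix x assume x: "x \<in> {x\<in>I \<times> {..<T}. v \<in> W x}"
      then have "v \<in> E (fst x)" "\<sigma> v = snd x"
        using W[rule_format, of x] by auto
      then show "x \<in> {i\<in>I. v \<in> E i} \<times> {\<sigma> v}"
        using x by (cases x) auto
    qed
    then have "card {x\<in>I \<times> {..<T}. v \<in> W x} \<le> card ({i\<in>I. v \<in> E i} \<times> {\<sigma> v})"
      using finI by (intro card_mono) auto
    then show ?thesis
      using degree[OF that] by (simp add: card_cartesian_product)
  qed
  have "1 \<le> m * \<Delta> * l"
    using k\<Delta> l m by (simp add: Suc_le_eq)
  moreover have "finite (I \<times> {..<T})"
    using finI by simp
  ultimately obtain \<tau> where \<tau>: "\<forall>x\<in>I \<times> {..<T}. \<forall>j<l. \<exists>v\<in>W x. \<tau> v = j"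
    using polychromatic_colouring_exists[OF finV _ W_edges W_degree l _ small2] by blast
  define col where "col v = \<sigma> v * l + \<tau> v" for v
  have "\<exists>v\<in>E i. col v = c" if "i \<in> I" "c < T * l" for i c
  proof -
    have "c div l < T" "c mod l < l" using that l by (auto simp: less_mult_imp_div_less)
    then have "\<exists>v\<in>W (i, c div l). \<tau> v = c mod l"
      using \<tau>[rule_format, of "(i, c div l)" "c mod l"] that by simp
    then obtain v where v: "v \<in> W (i, c div l)" "\<tau> v = c mod l"
      by blast
    moreover have "W (i, c div l) \<subseteq> {v\<in>E i. \<sigma> v = c div l}"
      using W[rule_format, of "(i, c div l)"] that \<open>c div l < T\<close> by simp
    ultimately have "v \<in> E i" "\<sigma> v = c div l"
      by auto
    then have "v \<in> E i" "col v = c"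
      using v(2) by (simp_all add: col_def)
    then show ?thesis
      by blast
  qed
  then show ?thesis by blast
qed

section \<open>The asymptotic choice of parameters\<close>

lemma nat_floor_bounds:
  fixes x :: real
  assumes "0 \<le> x"
  shows "real (nat \<lfloor>x\<rfloor>) \<le> x" "x - 1 < real (nat \<lfloor>x\<rfloor>)"
  using assms by linarith+

text \<open>Parameters for the two-round colouring of an n-uniform hypergraph of maximum degree n:
  T classes, each of which keeps about \<open>m \<approx> (1 - \<epsilon>) n / T\<close> vertices of every edge, and l
  colours per class with \<open>m / l \<ge> Q\<close>. The hypotheses are exactly the estimates under which
  both rounds of the local lemma succeed.\<close>
locale colouring_parameters =
  fixes n :: nat and L \<epsilon> Q :: real
  assumes n_over_L: "2 \<le> n / L"
    and \<epsilon>: "0 < \<epsilon>" "\<epsilon> < 1"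
    and Q: "1 \<le> Q" "Q \<le> (1 - \<epsilon>) * L - 1"
    and rate_nonneg: "0 \<le> \<epsilon> + (1 - \<epsilon>) * ln (1 - \<epsilon>)"
    and first_round: "4 * n ^ 3 * exp (- L * (\<epsilon> + (1 - \<epsilon>) * ln (1 - \<epsilon>))) \<le> 1"
    and second_round: "16 * exp (- Q) * L\<^sup>2 * n / Q \<le> 1"
begin

definition T :: nat where "T = nat \<lfloor>n / L\<rfloor>"
definition \<mu> :: real where "\<mu> = n / T"
definition m :: nat where "m = nat \<lfloor>(1 - \<epsilon>) * \<mu>\<rfloor>"
definition l :: nat where "l = nat \<lfloor>((1 - \<epsilon>) * \<mu> - 1) / Q\<rfloor>"

lemma L_ge_2: "2 \<le> L"
proof -
  have "2 \<le> (1 - \<epsilon>) * L" using Q by linarith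
  then have "0 < (1 - \<epsilon>) * L" by linarith
  then have "0 < L" using \<epsilon> by (simp add: zero_less_mult_iff)
  then have "(1 - \<epsilon>) * L \<le> L" using \<epsilon> mult_right_mono[of "1 - \<epsilon>" 1 L] by simp
  then show ?thesis using \<open>2 \<le> (1 - \<epsilon>) * L\<close> by linarith
qed

lemma n_ge_2L: "2 * L \<le> n"
  using n_over_L L_ge_2 by (simp add: field_simps)

lemma T_bounds: "0 < T" "real T \<le> n / L" "n / L \<le> 2 * T"
  using nat_floor_bounds[of "n / L"] n_over_L unfolding T_def by linarith+

lemma \<mu>_bounds: "L \<le> \<mu>" "\<mu> \<le> 2 * L"
proof -
  have "0 < real T" "0 < L" using T_bounds L_ge_2 by auto
  then show "L \<le> \<mu>" "\<mu> \<le> 2 * L"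
    using T_bounds unfolding \<mu>_def by (simp_all add: field_simps)
qed

lemma m_bounds: "(1 - \<epsilon>) * \<mu> - 1 < m" "m \<le> (1 - \<epsilon>) * \<mu>"
  using nat_floor_bounds[of "(1 - \<epsilon>) * \<mu>"] \<epsilon> \<mu>_bounds L_ge_2 unfolding m_def by auto

lemma l_bounds: "((1 - \<epsilon>) * \<mu> - 1) / Q - 1 < l" "Q * l \<le> (1 - \<epsilon>) * \<mu> - 1" "1 \<le> l"
proof -
  define y where "y = ((1 - \<epsilon>) * \<mu> - 1) / Q"
  have "Q \<le> (1 - \<epsilon>) * \<mu> - 1"
    using Q \<mu>_bounds \<epsilon> mult_left_mono[of L \<mu> "1 - \<epsilon>"] by linarith
  then have "1 \<le> y"
    using Q by (simp add: y_def)
  then have "y - 1 < l" "real l \<le> y"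
    using nat_floor_bounds[of y] unfolding l_def y_def by auto
  moreover have "Q * y = (1 - \<epsilon>) * \<mu> - 1"
    using Q by (simp add: y_def)
  ultimately show "y - 1 < l" "Q * l \<le> (1 - \<epsilon>) * \<mu> - 1" "1 \<le> l"
    using Q \<open>1 \<le> y\<close> mult_left_mono[of l y Q] by auto
qed

lemma first_round_condition:
  "4 * (T * ((real T - 1 + (1 - \<epsilon>)) / T) ^ n / (1 - \<epsilon>) ^ m) * (real n * n) \<le> 1"
proof -
  \<comment> \<open>the Chernoff exponent, per unit of the mean \<open>\<mu>\<close>, for a class to keep fewer than \<open>(1 - \<epsilon>) \<mu>\<close>
    vertices of an edge\<close>
  define rate where "rate = \<epsilon> + (1 - \<epsilon>) * ln (1 - \<epsilon>)"
  have T: "1 \<le> real T" using T_bounds by simp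
  have "((real T - 1 + (1 - \<epsilon>)) / T) ^ n = (1 - \<epsilon> / T) ^ n"
    using T by (simp add: field_simps)
  also have "\<dots> \<le> exp (- \<epsilon> / T) ^ n"
    using T \<epsilon> exp_ge_add_one_self[of "- \<epsilon> / T"] by (intro power_mono) (auto simp: field_simps)
  also have "\<dots> = exp (- \<epsilon> * \<mu>)"
    unfolding \<mu>_def by (simp add: exp_of_nat_mult[symmetric] field_simps)
  finally have shrink: "((real T - 1 + (1 - \<epsilon>)) / T) ^ n \<le> exp (- \<epsilon> * \<mu>)" .
  have "1 / (1 - \<epsilon>) ^ m = exp (- (m * ln (1 - \<epsilon>)))"
    using \<epsilon> by (simp add: exp_minus exp_of_nat_mult inverse_eq_divide)
  also have "\<dots> \<le> exp (- ((1 - \<epsilon>) * \<mu> * ln (1 - \<epsilon>)))"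
    using m_bounds \<epsilon> by (simp add: mult_right_mono_neg)
  finally have grow: "1 / (1 - \<epsilon>) ^ m \<le> exp (- ((1 - \<epsilon>) * \<mu> * ln (1 - \<epsilon>)))" .
  have "T * ((real T - 1 + (1 - \<epsilon>)) / T) ^ n / (1 - \<epsilon>) ^ m
      = T * (((real T - 1 + (1 - \<epsilon>)) / T) ^ n * (1 / (1 - \<epsilon>) ^ m))"
    by simp
  also have "\<dots> \<le> T * (exp (- \<epsilon> * \<mu>) * exp (- ((1 - \<epsilon>) * \<mu> * ln (1 - \<epsilon>))))"
    using shrink grow T \<epsilon> by (intro mult_left_mono mult_mono) auto
  also have "\<dots> = T * exp (- \<mu> * rate)"
    by (simp add: rate_def exp_add[symmetric] algebra_simps)
  also have "\<dots> \<le> n * exp (- L * rate)"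
  proof (rule mult_mono)
    have "real n / L \<le> real n / 1"
      using L_ge_2 by (intro divide_left_mono) auto
    then show "real T \<le> n"
      using T_bounds by simp
    show "exp (- \<mu> * rate) \<le> exp (- L * rate)"
      using \<mu>_bounds rate_nonneg by (simp add: rate_def mult_right_mono)
  qed auto
  finally have "4 * (T * ((real T - 1 + (1 - \<epsilon>)) / T) ^ n / (1 - \<epsilon>) ^ m) * (real n * n)
      \<le> 4 * (n * exp (- L * rate)) * (real n * n)"
    by (intro mult_right_mono mult_left_mono) auto
  also have "\<dots> \<le> 1"
    using first_round by (simp add: rate_def power3_eq_cube algebra_simps)
  finally show ?thesis .
qed

lemma second_round_condition: "4 * exp (- real m / l) * (real m * n * l) \<le> 1"
proof -
  have l: "0 < real l" using l_bounds by simp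
  have "Q \<le> m / l"
    using l_bounds m_bounds l by (simp add: pos_le_divide_eq)
  then have miss: "exp (- real m / l) \<le> exp (- Q)"
    by simp
  have "(1 - \<epsilon>) * \<mu> \<le> 1 * \<mu>"
    using \<mu>_bounds \<epsilon> L_ge_2 by (intro mult_right_mono) auto
  then have "(1 - \<epsilon>) * \<mu> \<le> 2 * L"
    using \<mu>_bounds by simp
  then have "real m \<le> 2 * L" "real l \<le> 2 * L / Q"
    using m_bounds l_bounds Q by (simp_all add: pos_le_divide_eq mult.commute)
  moreover have "real m * n \<le> 2 * L * n"
    using \<open>real m \<le> 2 * L\<close> by (rule mult_right_mono) simp
  ultimately have "real m * n * l \<le> 2 * L * n * (2 * L / Q)"
    using L_ge_2 by (intro mult_mono) simp_all
  then have "exp (- real m / l) * (real m * n * l) \<le> exp (- Q) * (2 * L * n * (2 * L / Q))"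
    by (rule mult_mono[OF miss]) simp_all
  then have "4 * exp (- real m / l) * (real m * n * l) \<le> 4 * (exp (- Q) * (2 * L * n * (2 * L / Q)))"
    by (simp add: mult.assoc)
  also have "\<dots> = 16 * exp (- Q) * L\<^sup>2 * n / Q"
    by (simp add: power2_eq_square)
  finally show ?thesis
    using second_round by linarith
qed

lemma colour_count_ge: "((1 - \<epsilon>) * n - n / L) / Q - n / L \<le> T * l"
proof -
  have T: "0 < real T" using T_bounds by simp
  have "T * (((1 - \<epsilon>) * \<mu> - 1) / Q - 1) \<le> real T * real l"
    using l_bounds T by (intro mult_left_mono) auto
  moreover have "T * (((1 - \<epsilon>) * \<mu> - 1) / Q - 1) = ((1 - \<epsilon>) * n - T) / Q - T"
    using T Q unfolding \<mu>_def by (simp add: field_simps)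
  moreover have "((1 - \<epsilon>) * n - n / L) / Q \<le> ((1 - \<epsilon>) * n - T) / Q"
    using T_bounds Q by (intro divide_right_mono) auto
  ultimately show ?thesis
    using T_bounds by simp
qed

lemma regular_hypergraph_polychromatic:
  fixes E :: "'i \<Rightarrow> 'v set"
  assumes "finite V" "finite I" "\<And>i. i \<in> I \<Longrightarrow> E i \<subseteq> V \<and> card (E i) = n"
    and "\<And>v. v \<in> V \<Longrightarrow> card {i\<in>I. v \<in> E i} \<le> n"
  shows "\<exists>(k :: nat) (col :: 'v \<Rightarrow> nat).
    ((1 - \<epsilon>) * n - n / L) / Q - n / L \<le> k \<and> (\<forall>i\<in>I. \<forall>c<k. \<exists>v\<in>E i. col v = c)"
proof -
  have "1 \<le> n * n" using n_ge_2L L_ge_2 by simp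
  moreover have "Q * 1 \<le> Q * l" using l_bounds Q by (intro mult_left_mono) auto
  then have "1 < real m" using m_bounds l_bounds Q by linarith
  then have "1 \<le> m" by simp
  moreover have "0 < l" using l_bounds by simp
  ultimately have "\<exists>col :: 'v \<Rightarrow> nat. \<forall>i\<in>I. \<forall>c<T * l. \<exists>v\<in>E i. col v = c"
    using \<epsilon> by (intro polychromatic_product_colouring[OF assms T_bounds(1) _ _ _ _ _
        first_round_condition second_round_condition]) simp_all
  then show ?thesis
    using colour_count_ge by blast
qed

end

section \<open>Translates of a finite set in a discrete torus\<close>

definition torus_reduce :: "int \<Rightarrow> int ^ 'd \<Rightarrow> int ^ 'd" where
  "torus_reduce M x = (\<chi> a. x $ a mod M)"

lemma torus_reduce_add_left: "torus_reduce M (torus_reduce M x + y) = torus_reduce M (x + y)"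
  by (simp add: torus_reduce_def vec_eq_iff mod_add_left_eq)

lemma torus_reduce_diff_left: "torus_reduce M (torus_reduce M x - y) = torus_reduce M (x - y)"
  by (simp add: torus_reduce_def vec_eq_iff mod_diff_left_eq)

lemma torus_reduce_idem: "torus_reduce M (torus_reduce M x) = torus_reduce M x"
  by (simp add: torus_reduce_def vec_eq_iff)

lemma finite_range_torus_reduce:
  assumes "0 < M"
  shows "finite (range (torus_reduce M :: int ^ 'd \<Rightarrow> int ^ 'd))"
proof -
  have "range (torus_reduce M :: int ^ 'd \<Rightarrow> int ^ 'd) \<subseteq> vec_lambda ` PiE UNIV (\<lambda>_. {0..<M})"
  proof
    fix v :: "int ^ 'd" assume "v \<in> range (torus_reduce M)"
    then have "(\<lambda>a. v $ a) \<in> PiE UNIV (\<lambda>_. {0..<M})"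
      using assms by (auto simp: torus_reduce_def)
    then show "v \<in> vec_lambda ` PiE UNIV (\<lambda>_. {0..<M})"
      by (metis vec_lambda_eta image_eqI)
  qed
  moreover have "finite (vec_lambda ` PiE (UNIV :: 'd set) (\<lambda>_. {0..<M}))"
    by (intro finite_imageI finite_PiE) auto
  ultimately show ?thesis
    by (rule finite_subset)
qed

lemma exists_torus_modulus:
  fixes S :: "(int ^ 'd) set"
  assumes "finite S"
  obtains M where "0 < M" "\<And>s a. s \<in> S \<Longrightarrow> 2 * \<bar>s $ a\<bar> < M"
proof
  define B where "B = (\<Sum>s\<in>S. \<Sum>a\<in>UNIV. \<bar>s $ a\<bar>)"
  have "\<bar>s $ a\<bar> \<le> B" if "s \<in> S" for s a
  proof -
    have "\<bar>s $ a\<bar> \<le> (\<Sum>a\<in>UNIV. \<bar>s $ a\<bar>)"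
      by (rule member_le_sum) auto
    also have "\<dots> \<le> B"
      unfolding B_def using assms that by (intro member_le_sum) (auto intro: sum_nonneg)
    finally show ?thesis .
  qed
  moreover have "0 \<le> B"
    unfolding B_def by (intro sum_nonneg) auto
  ultimately show "0 < 2 * B + 1" "\<And>s a. s \<in> S \<Longrightarrow> 2 * \<bar>s $ a\<bar> < 2 * B + 1"
    by fastforce+
qed

context
  fixes S :: "(int ^ 'd) set" and M :: int
  assumes modulus: "\<And>s a. s \<in> S \<Longrightarrow> 2 * \<bar>s $ a\<bar> < M"
begin

lemma card_torus_translate: "card ((\<lambda>s. torus_reduce M (u + s)) ` S) = card S"
proof (rule card_image, rule inj_onI)
  fix s s' assume s: "s \<in> S" "s' \<in> S" and eq: "torus_reduce M (u + s) = torus_reduce M (u + s')"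
  show "s = s'"
  proof (rule vec_eq_iff[THEN iffD2], rule allI)
    fix a
    have "(u $ a + s $ a) mod M = (u $ a + s' $ a) mod M"
      using eq by (simp add: torus_reduce_def vec_eq_iff)
    then have "M dvd s $ a - s' $ a"
      by (metis add_diff_cancel_left mod_eq_dvd_iff)
    moreover have "\<bar>s $ a - s' $ a\<bar> < M"
      using modulus[OF s(1), of a] modulus[OF s(2), of a] by linarith
    ultimately show "s $ a = s' $ a"
      using dvd_imp_le_int[of "s $ a - s' $ a" M] by fastforce
  qed
qed

lemma card_torus_translates_containing_le:
  assumes "finite S" "v \<in> range (torus_reduce M)"
  shows "card {u\<in>range (torus_reduce M). v \<in> (\<lambda>s. torus_reduce M (u + s)) ` S} \<le> card S"
proof -
  have "{u\<in>range (torus_reduce M). v \<in> (\<lambda>s. torus_reduce M (u + s)) ` S}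
      \<subseteq> (\<lambda>s. torus_reduce M (v - s)) ` S"
    by (force simp: torus_reduce_diff_left torus_reduce_idem)
  then have "card {u\<in>range (torus_reduce M). v \<in> (\<lambda>s. torus_reduce M (u + s)) ` S}
      \<le> card ((\<lambda>s. torus_reduce M (v - s)) ` S)"
    using assms(1) by (intro card_mono) auto
  also have "\<dots> \<le> card S"
    using assms(1) by (rule card_image_le)
  finally show ?thesis .
qed

lemma polychromatic_torus_lift:
  assumes "\<forall>u\<in>range (torus_reduce M). \<forall>c<k. \<exists>v\<in>(\<lambda>s. torus_reduce M (u + s)) ` S. col v = c"
  shows "polychromatic (col \<circ> torus_reduce M) k S"
  unfolding polychromatic_def
proof (intro allI impI)
  fix x c assume "c < k"
  then obtain s where "s \<in> S" "col (torus_reduce M (torus_reduce M x + s)) = c"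
    using assms by blast
  then show "\<exists>s\<in>S. (col \<circ> torus_reduce M) (x + s) = c"
    by (auto simp: torus_reduce_add_left)
qed

end

section \<open>Polychromatic colourings of \<open>\<int>\<^sup>d\<close>\<close>

lemma polychromatic_le_card:
  fixes c :: "'a::monoid_add \<Rightarrow> nat"
  assumes "finite S" "polychromatic c k S"
  shows "k \<le> card S"
proof -
  have "{..<k} \<subseteq> c ` S"
    using assms(2) unfolding polychromatic_def by (metis add_0 image_eqI lessThan_iff subsetI)
  then have "card {..<k} \<le> card (c ` S)"
    using assms(1) by (intro card_mono) auto
  also have "\<dots> \<le> card S"
    using assms(1) by (rule card_image_le)
  finally show ?thesis by simp
qed

lemma le_p_Zd:
  fixes S :: "(int ^ 'd) set"
  assumes "finite S" "polychromatic c k S"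
  shows "k \<le> p_Zd S"
  unfolding p_Zd_def using assms polychromatic_le_card[OF assms(1)]
  by (intro Greatest_le_nat[where b = "card S"]) blast+

lemma (in colouring_parameters) p_Zd_ge:
  fixes S :: "(int ^ 'd) set"
  assumes "finite S" "card S = n"
  shows "((1 - \<epsilon>) * n - n / L) / Q - n / L \<le> p_Zd S"
proof -
  obtain M where M: "0 < M" "\<And>s a. s \<in> S \<Longrightarrow> 2 * \<bar>s $ a\<bar> < M"
    using exists_torus_modulus[OF assms(1)] by blast
  define V where "V = range (torus_reduce M :: int ^ 'd \<Rightarrow> int ^ 'd)"
  define E where "E u = (\<lambda>s. torus_reduce M (u + s)) ` S" for u
  have finV: "finite V"
    unfolding V_def using M(1) by (rule finite_range_torus_reduce)
  have edges: "E u \<subseteq> V \<and> card (E u) = n" if "u \<in> V" for u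
    using card_torus_translate[OF M(2)] assms(2) by (auto simp: E_def V_def)
  have degree: "card {u\<in>V. v \<in> E u} \<le> n" if "v \<in> V" for v
    using card_torus_translates_containing_le[OF M(2) assms(1)] that assms(2)
    by (simp add: E_def V_def)
  obtain k :: nat and col :: "int ^ 'd \<Rightarrow> nat"
    where k: "((1 - \<epsilon>) * n - n / L) / Q - n / L \<le> k"
      and colouring: "\<forall>u\<in>V. \<forall>c<k. \<exists>v\<in>E u. col v = c"
    using regular_hypergraph_polychromatic[OF finV finV edges degree] by blast
  have "polychromatic (col \<circ> torus_reduce M) k S"
    using polychromatic_torus_lift[OF M(2)] colouring unfolding V_def E_def by blast
  then have "k \<le> p_Zd S"
    by (rule le_p_Zd[OF assms(1)])
  then show ?thesis
    using k by linarith
qed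

lemma eventually_colouring_parameters:
  "eventually (\<lambda>n. colouring_parameters n (ln n ^ 3) (ln n powr (-1/4)) (ln n + 8 * ln (ln n)))
    sequentially"
  unfolding colouring_parameters_def by (intro eventually_conj; real_asymp)

theorem theorem19:
  assumes "CARD('d) \<ge> 2"
  shows "\<exists>f :: nat \<Rightarrow> real. f \<longlonglongrightarrow> 0 \<and>
           (\<forall>S :: (int ^ 'd) set. finite S \<longrightarrow>
              real (p_Zd S) \<ge> (1 + f (card S)) * real (card S) / ln (real (card S)))"
proof -
  \<comment> \<open>The argument works in every dimension.\<close>
  define \<epsilon> where "\<epsilon> n = ln (real n) powr (-1/4)" for n :: nat
  define L where "L n = ln (real n) ^ 3" for n :: nat
  define Q where "Q n = ln (real n) + 8 * ln (ln (real n))" for n :: nat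
  define G where "G n = ((1 - \<epsilon> n) - 1 / L n) * ln n / Q n - ln n / L n" for n :: nat
  obtain N where N: "\<And>n. N \<le> n \<Longrightarrow> colouring_parameters n (L n) (\<epsilon> n) (Q n)"
    using eventually_colouring_parameters unfolding eventually_sequentially \<epsilon>_def L_def Q_def
    by blast
  define f where "f n = (if N \<le> n then G n - 1 else -1)" for n
  have "f \<longlonglongrightarrow> 0"
  proof (rule Lim_transform_eventually)
    show "(\<lambda>n. G n - 1) \<longlonglongrightarrow> 0"
      unfolding G_def \<epsilon>_def L_def Q_def by real_asymp
    show "eventually (\<lambda>n. G n - 1 = f n) sequentially"
      using eventually_ge_at_top[of N] by eventually_elim (simp add: f_def)
  qed
  moreover have "(1 + f (card S)) * card S / ln (card S) \<le> p_Zd S" if "finite S" for S :: "(int ^ 'd) set"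
  proof (cases "N \<le> card S")
    case True
    then interpret colouring_parameters "card S" "L (card S)" "\<epsilon> (card S)" "Q (card S)"
      by (rule N)
    have "0 < ln (real (card S))" using n_ge_2L L_ge_2 by simp
    then have "(1 + f (card S)) * card S / ln (card S)
        = ((1 - \<epsilon> (card S)) * card S - card S / L (card S)) / Q (card S) - card S / L (card S)"
      using True L_ge_2 Q by (simp add: f_def G_def field_simps)
    with p_Zd_ge[OF that refl] show ?thesis by simp
  qed (simp add: f_def)
  ultimately show ?thesis
    by blast
qed

end
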